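(* Let $\mathcal{H}$ be any undirected hypergraph on $\{1,2,3\}$ and consider any network dynamical system on $\mathcal{H}$ with one-dimensional node states, smooth $F$ and smooth edge-dependent coupling functions $G_e$. Then the system does not possess a Field cycle; i.e., there do not exist distinct $i,j\in\{1,2,3\}$ such that $\Delta$, $S_i$, $S_j$ are dynamically invariant and there are two distinct hyperbolic equilibria $\xi_1,\xi_2\in\Delta$, a heteroclinic trajectory from $\xi_1$ to $\xi_2$ contained in $S_i\setminus\Delta$, and a heteroclinic trajectory from $\xi_2$ to $\xi_1$ contained in $S_j\setminus\Delta$.
   Context: A directed hypergraph on $\mathcal{V}=\{1,\dots,N\}$ is a set $\mathcal{E}$ of hyperedges $e=(T(e),H(e))$ with nonempty tail $T(e)$ and head $H(e)$; it is undirected if every hyperedge has the form $(A,A)$. A network dynamical system on it is $\dot x_k = F(x_k) + \sum_{e\in\mathcal{E}:\,k\in H(e)} G_e(x_k; x_{T(e)})$ on $\mathbb{R}^N$, with $F:\mathbb R\to\mathbb R$ smooth and each $G_e:\mathbb{R}\times\mathbb{R}^{|T(e)|}\to\mathbb{R}$ smooth, invariant under permutations of its tail arguments and depending nontrivially on them. For $N=3$: $\Delta=\{x_1=x_2=x_3\}$, $S_1=\{x_2=x_3\}$, $S_2=\{x_1=x_3\}$, $S_3=\{x_1=x_2\}$ ($S_j$ is the set where all coordinates except $x_j$ coincide). A heteroclinic trajectory from $\xi$ to $\xi'$ is a solution $x(t)$, $t\in\mathbb R$, with $x(t)\to\xi$ as $t\to-\infty$ and $x(t)\to\xi'$ as $t\to+\infty$.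 An equilibrium is hyperbolic if its Jacobian has no eigenvalue with zero real part. *)

theory Defs
  imports "HOL-Analysis.Analysis" "HOL-Library.Numeral_Type"
begin

fun Ck :: "nat \<Rightarrow> ('a::euclidean_space \<Rightarrow> real) \<Rightarrow> bool" where
  "Ck 0 f = continuous_on UNIV f"
| "Ck (Suc k) f = ((\<forall>x. f differentiable (at x)) \<and>
      (\<forall>v. Ck k (\<lambda>x. frechet_derivative f (at x) v)))"

definition smooth :: "('a::euclidean_space \<Rightarrow> real) \<Rightarrow> bool" where
  "smooth f \<longleftrightarrow> (\<forall>k. Ck k f)"

text \<open>Hyperedges on nodes of type 3 (nodes 1,2,3): pairs (tail, head).\<close>
type_synonym hedge = "3 set \<times> 3 set"

definition undirected_hypergraph :: "hedge set \<Rightarrow> bool" where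
  "undirected_hypergraph E \<longleftrightarrow> (\<forall>e\<in>E. fst e \<noteq> {} \<and> snd e \<noteq> {} \<and> fst e = snd e)"

text \<open>A coupling function for edge e: G e y x, where y is the own state x_k and only the
  tail coordinates x_{T(e)} of x matter (so G e is a function of (x_k; x_{T(e)})).\<close>
definition admissible_coupling :: "3 set \<Rightarrow> (real \<Rightarrow> real^3 \<Rightarrow> real) \<Rightarrow> bool" where
  "admissible_coupling T g \<longleftrightarrow>
     smooth (\<lambda>p::real \<times> (real^3). g (fst p) (snd p)) \<and>
     (\<forall>y x x'. (\<forall>k\<in>T. x $ k = x' $ k) \<longrightarrow> g y x = g y x') \<and>
     (\<forall>\<sigma> y x. \<sigma> permutes T \<longrightarrow> g y (\<chi> k. x $ \<sigma> k) = g y x) \<and>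
     (\<exists>y x x'. g y x \<noteq> g y x')"

definition network_vf ::
  "(real \<Rightarrow> real) \<Rightarrow> (hedge \<Rightarrow> real \<Rightarrow> real^3 \<Rightarrow> real) \<Rightarrow> hedge set \<Rightarrow> real^3 \<Rightarrow> real^3" where
  "network_vf F G E x = (\<chi> k. F (x $ k) + (\<Sum>e\<in>{e\<in>E. k \<in> snd e}. G e (x $ k) x))"

definition Diag :: "(real^3) set" where
  "Diag = {x. x $ 1 = x $ 2 \<and> x $ 2 = x $ 3}"

definition Ssub :: "3 \<Rightarrow> (real^3) set" where
  "Ssub i = {x. \<forall>a b. a \<noteq> i \<longrightarrow> b \<noteq> i \<longrightarrow> x $ a = x $ b}"

definition is_solution :: "(real^3 \<Rightarrow> real^3) \<Rightarrow> real set \<Rightarrow> (real \<Rightarrow> real^3) \<Rightarrow> bool" where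
  "is_solution f I x \<longleftrightarrow> (\<forall>t\<in>I. (x has_vector_derivative f (x t)) (at t within I))"

definition dyn_invariant :: "(real^3 \<Rightarrow> real^3) \<Rightarrow> (real^3) set \<Rightarrow> bool" where
  "dyn_invariant f M \<longleftrightarrow> (\<forall>I x t0. is_interval I \<longrightarrow> is_solution f I x \<longrightarrow> t0 \<in> I \<longrightarrow>
      x t0 \<in> M \<longrightarrow> (\<forall>t\<in>I. x t \<in> M))"

definition hyperbolic_equilibrium :: "(real^3 \<Rightarrow> real^3) \<Rightarrow> real^3 \<Rightarrow> bool" where
  "hyperbolic_equilibrium f \<xi> \<longleftrightarrow> f \<xi> = 0 \<and>
     (\<exists>f'. (f has_derivative f') (at \<xi>) \<and>
        (\<forall>\<mu>::complex. Re \<mu> = 0 \<longrightarrow>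
           det (\<chi> i j. complex_of_real (matrix f' $ i $ j) - (if i = j then \<mu> else 0)) \<noteq> 0))"

definition heteroclinic :: "(real^3 \<Rightarrow> real^3) \<Rightarrow> real^3 \<Rightarrow> real^3 \<Rightarrow> (real \<Rightarrow> real^3) \<Rightarrow> bool" where
  "heteroclinic f \<xi> \<xi>' x \<longleftrightarrow> is_solution f UNIV x \<and>
     (x \<longlongrightarrow> \<xi>) at_bot \<and> (x \<longlongrightarrow> \<xi>') at_top"

end

theory Submission
  imports Defs
begin

text \<open>Linearize at \<open>\<xi>1 \<in> \<Delta>\<close>. Dynamical invariance of \<open>\<Delta>\<close>, \<open>S_i\<close> and \<open>S_j\<close> forces the vector field,
  hence its Jacobian \<open>J\<close>, to preserve these subspaces, and the undirected coupling makes \<open>J\<close>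
  symmetric. With only three nodes these constraints make the eigenvalue of \<open>J\<close> transverse to
  \<open>\<Delta>\<close> inside \<open>S_i\<close> equal to the one inside \<open>S_j\<close>. The connection leaving \<open>\<xi>1\<close> within
  \<open>S_i - \<Delta>\<close> forces the former to be \<open>\<ge> 0\<close>, the connection arriving at \<open>\<xi>1\<close> within
  \<open>S_j - \<Delta>\<close> forces the latter to be \<open>\<le> 0\<close>. So it vanishes, contradicting hyperbolicity.\<close>

section \<open>Continuously differentiable functions\<close>

lemma Ck1_iff:
  "Ck 1 \<phi> \<longleftrightarrow> (\<forall>x. \<phi> differentiable (at x)) \<and>
     (\<forall>v. continuous_on UNIV (\<lambda>x. frechet_derivative \<phi> (at x) v))"
  by (simp only: One_nat_def Ck.simps)

declare Ck.simps(2) [simp del] \<comment> \<open>otherwise automation unfolds \<open>Ck 1\<close> into iterated derivatives\<close>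

lemma smooth_imp_Ck1: "smooth \<phi> \<Longrightarrow> Ck 1 \<phi>"
  unfolding smooth_def by blast

lemma Ck1I:
  assumes "\<And>x. (\<phi> has_derivative D x) (at x)"
    and "\<And>v. continuous_on UNIV (\<lambda>x. D x v)"
  shows "Ck 1 \<phi>"
proof -
  have "frechet_derivative \<phi> (at x) = D x" for x
    using frechet_derivative_at[OF assms(1)] by simp
  then show ?thesis
    using assms unfolding Ck1_iff differentiable_def by auto
qed

lemma Ck1_has_derivative: "Ck 1 \<phi> \<Longrightarrow> (\<phi> has_derivative frechet_derivative \<phi> (at x)) (at x)"
  unfolding Ck1_iff using frechet_derivative_works by blast

lemma Ck1_continuous_derivative:
  "Ck 1 \<phi> \<Longrightarrow> continuous_on UNIV (\<lambda>x. frechet_derivative \<phi> (at x) v)"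
  unfolding Ck1_iff by blast

lemma Ck1_add: "Ck 1 \<phi> \<Longrightarrow> Ck 1 \<psi> \<Longrightarrow> Ck 1 (\<lambda>x. \<phi> x + \<psi> x)"
  by (rule Ck1I[where D="\<lambda>x v. frechet_derivative \<phi> (at x) v + frechet_derivative \<psi> (at x) v"])
    (intro has_derivative_add Ck1_has_derivative, assumption+,
     intro continuous_on_add Ck1_continuous_derivative, assumption+)

lemma Ck1_diff: "Ck 1 \<phi> \<Longrightarrow> Ck 1 \<psi> \<Longrightarrow> Ck 1 (\<lambda>x. \<phi> x - \<psi> x)"
  by (rule Ck1I[where D="\<lambda>x v. frechet_derivative \<phi> (at x) v - frechet_derivative \<psi> (at x) v"])
    (intro has_derivative_diff Ck1_has_derivative, assumption+,
     intro continuous_on_diff Ck1_continuous_derivative, assumption+)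

lemma Ck1_minus: "Ck 1 \<phi> \<Longrightarrow> Ck 1 (\<lambda>x. - \<phi> x)"
  by (rule Ck1I[where D="\<lambda>x v. - frechet_derivative \<phi> (at x) v"])
    (intro has_derivative_minus Ck1_has_derivative, assumption,
     intro continuous_on_minus Ck1_continuous_derivative, assumption)

lemma Ck1_sum:
  "finite S \<Longrightarrow> (\<And>i. i \<in> S \<Longrightarrow> Ck 1 (\<phi> i)) \<Longrightarrow> Ck 1 (\<lambda>x. \<Sum>i\<in>S. \<phi> i x)"
  by (rule Ck1I[where D="\<lambda>x v. \<Sum>i\<in>S. frechet_derivative (\<phi> i) (at x) v"])
    (intro has_derivative_sum Ck1_has_derivative, simp,
     intro continuous_on_sum Ck1_continuous_derivative, simp)

lemma Ck1_compose_linear: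
  fixes L :: "'a::euclidean_space \<Rightarrow> 'b::euclidean_space"
  assumes "Ck 1 \<phi>" "linear L"
  shows "Ck 1 (\<lambda>x. \<phi> (L x))"
proof (rule Ck1I[where D="\<lambda>x v. frechet_derivative \<phi> (at (L x)) (L v)"])
  fix x
  have "(L has_derivative L) (at x)"
    using assms(2) by (simp add: linear_imp_has_derivative)
  then show "((\<lambda>x. \<phi> (L x)) has_derivative (\<lambda>v. frechet_derivative \<phi> (at (L x)) (L v))) (at x)"
    using has_derivative_compose[OF _ Ck1_has_derivative[OF assms(1)]] by blast
next
  fix v
  have "continuous_on UNIV L"
    using assms(2) by (simp add: linear_continuous_on linear_linear)
  then show "continuous_on UNIV (\<lambda>x. frechet_derivative \<phi> (at (L x)) (L v))"
    using continuous_on_compose2[OF Ck1_continuous_derivative[OF assms(1)]] by blast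
qed

lemma Ck1_has_real_derivative_line:
  assumes "Ck 1 \<phi>"
  shows "((\<lambda>s. \<phi> (q + s *\<^sub>R v)) has_real_derivative frechet_derivative \<phi> (at (q + s *\<^sub>R v)) v) (at s)"
proof -
  have "linear (frechet_derivative \<phi> (at y))" for y
    using Ck1_has_derivative[OF assms] has_derivative_linear by blast
  moreover have "((\<lambda>s. q + s *\<^sub>R v) has_derivative (\<lambda>s. s *\<^sub>R v)) (at s)"
    by (auto intro!: derivative_eq_intros)
  note has_derivative_compose[OF this Ck1_has_derivative[OF assms]]
  ultimately show ?thesis
    by (simp add: has_field_derivative_def linear_scale mult.commute[of _ "frechet_derivative _ _ _"])
qed

lemma Ck1_lipschitz_on_cball:
  fixes \<phi> :: "'a::euclidean_space \<Rightarrow> real"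
  assumes "Ck 1 \<phi>"
  shows "\<exists>B. B-lipschitz_on (cball p r) \<phi>"
proof -
  have "\<exists>M\<ge>0. \<forall>x\<in>cball p r. \<bar>frechet_derivative \<phi> (at x) b\<bar> \<le> M" for b
  proof -
    have "compact ((\<lambda>x. frechet_derivative \<phi> (at x) b) ` cball p r)"
      by (rule compact_continuous_image[OF continuous_on_subset[OF Ck1_continuous_derivative[OF assms]]])
        auto
    then obtain M where "\<forall>y\<in>(\<lambda>x. frechet_derivative \<phi> (at x) b) ` cball p r. norm y \<le> M"
      using compact_imp_bounded bounded_iff by metis
    then show ?thesis
      by (intro exI[of _ "max M 0"]) force
  qed
  then obtain M where M0: "\<And>b. 0 \<le> M b"
    and M: "\<And>b x. x \<in> cball p r \<Longrightarrow> \<bar>frechet_derivative \<phi> (at x) b\<bar> \<le> M b"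
    by metis
  define B where "B = (\<Sum>b\<in>Basis. M b)"
  have "norm (\<phi> x - \<phi> y) \<le> B * norm (x - y)" if "x \<in> cball p r" "y \<in> cball p r" for x y
  proof (rule differentiable_bound[where f'="\<lambda>x. frechet_derivative \<phi> (at x)" and S="cball p r"])
    show "(\<phi> has_derivative frechet_derivative \<phi> (at x)) (at x within cball p r)" for x
      using Ck1_has_derivative[OF assms] has_derivative_at_withinI by blast
    show "onorm (frechet_derivative \<phi> (at x)) \<le> B" if "x \<in> cball p r" for x
    proof -
      have "bounded_linear (frechet_derivative \<phi> (at x))"
        using Ck1_has_derivative[OF assms] has_derivative_bounded_linear by blast
      then have "onorm (frechet_derivative \<phi> (at x)) \<le> (\<Sum>b\<in>Basis. norm (frechet_derivative \<phi> (at x) b))"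
        by (rule onorm_componentwise)
      also have "\<dots> \<le> B"
        unfolding B_def using M[OF that] by (intro sum_mono) simp
      finally show ?thesis .
    qed
  qed (use that in auto)
  moreover have "0 \<le> B"
    unfolding B_def using M0 by (simp add: sum_nonneg)
  ultimately have "B-lipschitz_on (cball p r) \<phi>"
    by (intro lipschitz_onI) (auto simp: dist_norm)
  then show ?thesis ..
qed

lemma Ck1_components_lipschitz_on_cball:
  fixes f :: "'a::euclidean_space \<Rightarrow> real^'n"
  assumes "\<And>k. Ck 1 (\<lambda>x. f x $ k)"
  shows "\<exists>L. L-lipschitz_on (cball p r) f"
proof -
  obtain B where B: "\<And>k. lipschitz_on (B k) (cball p r) (\<lambda>x. f x $ k)"
    using Ck1_lipschitz_on_cball[OF assms] by metis
  have "dist (f x) (f y) \<le> (\<Sum>k\<in>UNIV. B k) * dist x y"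
    if "x \<in> cball p r" "y \<in> cball p r" for x y
  proof -
    have "norm (f x - f y) \<le> (\<Sum>k\<in>UNIV. \<bar>(f x - f y) $ k\<bar>)"
      by (rule norm_le_l1_cart)
    also have "\<dots> \<le> (\<Sum>k\<in>UNIV. B k * dist x y)"
      using lipschitz_onD[OF B that] by (intro sum_mono) (simp add: dist_real_def)
    finally show ?thesis
      by (simp add: dist_norm sum_distrib_right)
  qed
  moreover have "0 \<le> (\<Sum>k\<in>UNIV. B k)"
    using B lipschitz_on_nonneg by (blast intro: sum_nonneg)
  ultimately show ?thesis
    by (blast intro: lipschitz_onI)
qed

section \<open>Local solutions of Lipschitz equations\<close>

lemma lipschitz_picard_fixpoint:
  fixes g :: "'a::euclidean_space \<Rightarrow> 'a"
  assumes lip: "K-lipschitz_on UNIV g" and h: "0 < h" "h * K < 1"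
  obtains w where "continuous_on UNIV w"
    and "\<And>t. t \<in> {0..h} \<Longrightarrow> w t = p + integral {0..t} (\<lambda>s. g (w s))"
proof -
  have K: "0 \<le> K" using lipschitz_on_nonneg[OF lip] .
  have g_cont: "continuous_on A (\<lambda>s. g (apply_bcontfun u s))" for u A
    by (rule continuous_on_compose2[OF lipschitz_on_continuous_on[OF lip]]) auto
  \<comment> \<open>The Picard operator, made total on bounded continuous functions by clamping time to \<open>[0, h]\<close>.\<close>
  define P where "P u t = p + integral {0..t} (\<lambda>s. g (apply_bcontfun u s))"
    for u :: "real \<Rightarrow>\<^sub>C 'a" and t :: real
  have "continuous_on (cbox 0 h) (P u)" for u
    unfolding P_def cbox_interval
    by (intro continuous_intros indefinite_integral_continuous_1 integrable_continuous_real g_cont)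
  then have "\<exists>w. \<forall>t. apply_bcontfun w t = P u (clamp 0 h t)" for u
    using continuous_on_cbox_bcontfunE by metis
  then obtain T where T: "\<And>u t. apply_bcontfun (T u) t = P u (clamp 0 h t)"
    by metis
  have contraction: "dist (T u) (T v) \<le> (h * K) * dist u v" for u v
  proof (rule dist_bound)
    fix t
    define \<tau> where "\<tau> = clamp 0 h t"
    have \<tau>: "\<tau> \<in> {0..h}"
      using clamp_in_interval[of 0 h t] h by (simp add: \<tau>_def cbox_interval)
    have int: "(\<lambda>s. g (apply_bcontfun w s)) integrable_on {0..\<tau>}" for w
      by (intro integrable_continuous_real g_cont)
    have "dist (T u t) (T v t) = norm (integral {0..\<tau>} (\<lambda>s. g (u s) - g (v s)))"
      by (simp add: T P_def \<tau>_def[symmetric] dist_norm integral_diff[OF int int])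
    also have "\<dots> \<le> (K * dist u v) * Henstock_Kurzweil_Integration.content {0..\<tau>}"
    proof (rule has_integral_bound_real[where S="{}"])
      show "((\<lambda>s. g (u s) - g (v s)) has_integral integral {0..\<tau>} (\<lambda>s. g (u s) - g (v s))) {0..\<tau>}"
        using integrable_diff[OF int int] by (simp add: integrable_integral)
      show "norm (g (u s) - g (v s)) \<le> K * dist u v" for s
        using lipschitz_on_normD[OF lip, of "u s" "v s"] dist_bounded[of u s v] K
        by (simp add: dist_norm order_trans[OF _ mult_left_mono])
    qed (use K in auto)
    also have "\<dots> \<le> (h * K) * dist u v"
      using mult_left_mono[OF mult_right_mono[OF _ zero_le_dist] K, of \<tau> h u v] \<tau>
      by (simp add: algebra_simps)
    finally show "dist (T u t) (T v t) \<le> (h * K) * dist u v" .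
  qed
  obtain u where u: "T u = u"
    using banach_fix_type[of "h * K" T] contraction h K by auto
  show thesis
  proof (rule that[of "apply_bcontfun u"])
    show "continuous_on UNIV (apply_bcontfun u)"
      by simp
    show "u t = p + integral {0..t} (\<lambda>s. g (u s))" if "t \<in> {0..h}" for t
      using T[of u t] that by (simp add: u P_def clamp_cancel_cbox cbox_interval)
  qed
qed

lemma lipschitz_on_cball_bounded_extension:
  fixes f :: "'a::euclidean_space \<Rightarrow> 'b::real_normed_vector"
  assumes lip: "L-lipschitz_on (cball p r) f" and r: "0 < r"
  obtains g M where "L-lipschitz_on UNIV g" "\<forall>x\<in>cball p r. g x = f x"
    and "0 < M" "\<forall>x. norm (g x) \<le> M"
proof -
  have L: "0 \<le> L" using lipschitz_on_nonneg[OF lip] .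
  define cp where "cp = closest_point (cball p r)"
  have cp: "cp x \<in> cball p r" for x
    unfolding cp_def using r by (intro closest_point_in_set) auto
  have "1-lipschitz_on UNIV cp"
    unfolding cp_def using closest_point_lipschitz[of "cball p r"] r by (auto intro!: lipschitz_onI)
  moreover have "L-lipschitz_on (cp ` UNIV) f"
    using lipschitz_on_subset[OF lip] cp by blast
  ultimately have "L-lipschitz_on UNIV (\<lambda>x. f (cp x))"
    using lipschitz_on_compose2 by fastforce
  moreover have "norm (f (cp x)) \<le> norm (f p) + L * r + 1" for x
  proof -
    have "norm (f (cp x) - f p) \<le> L * norm (cp x - p)"
      using lipschitz_on_normD[OF lip cp] r by simp
    also have "\<dots> \<le> L * r"
      using cp[of x] L by (intro mult_left_mono) (auto simp: dist_norm norm_minus_commute)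
    finally show ?thesis
      using norm_triangle_sub[of "f (cp x)" "f p"] by linarith
  qed
  moreover have "0 < norm (f p) + L * r + 1"
    using L r by (simp add: add_nonneg_pos)
  moreover have "\<forall>x\<in>cball p r. f (cp x) = f x"
    unfolding cp_def by (simp add: closest_point_self)
  ultimately show thesis
    by (intro that) auto
qed

lemma lipschitz_on_cball_local_solution:
  fixes f :: "'a::euclidean_space \<Rightarrow> 'a"
  assumes lip: "L-lipschitz_on (cball p r) f" and r: "0 < r"
  obtains h u where "0 < h" "u 0 = p"
    and "\<And>t. t \<in> {0..h} \<Longrightarrow> (u has_vector_derivative f (u t)) (at t within {0..h})"
proof -
  obtain g M where lip_g: "L-lipschitz_on UNIV g" and g: "\<forall>x\<in>cball p r. g x = f x"
    and M: "0 < M" "\<forall>x. norm (g x) \<le> M"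
    using lipschitz_on_cball_bounded_extension[OF lip r] .
  have L: "0 \<le> L" using lipschitz_on_nonneg[OF lip] .
  define h where "h = min (r / M) (1 / (2 * L + 1))"
  have h: "0 < h" "h * M \<le> r" "h * L < 1"
    using r M L by (auto simp: h_def min_def field_simps)
  obtain w where w_cont: "continuous_on UNIV w"
    and w: "\<And>t. t \<in> {0..h} \<Longrightarrow> w t = p + integral {0..t} (\<lambda>s. g (w s))"
    using lipschitz_picard_fixpoint[OF lip_g h(1,3)] by blast
  have gw_cont: "continuous_on A (\<lambda>s. g (w s))" for A
    using continuous_on_compose2[OF lipschitz_on_continuous_on[OF lip_g] continuous_on_subset[OF w_cont]]
    by blast
  have w_ball: "w t \<in> cball p r" if "t \<in> {0..h}" for t
  proof -
    have "norm (integral {0..t} (\<lambda>s. g (w s))) \<le> M * Henstock_Kurzweil_Integration.content {0..t}"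
      by (rule has_integral_bound_real[where S="{}"])
        (use M in \<open>auto intro: integrable_integral integrable_continuous_real gw_cont\<close>)
    also have "\<dots> \<le> h * M" using that M by simp
    finally show ?thesis
      using w[OF that] h(2) by (simp add: dist_norm)
  qed
  have "(w has_vector_derivative f (w t)) (at t within {0..h})" if "t \<in> {0..h}" for t
  proof -
    have "((\<lambda>t. p + integral {0..t} (\<lambda>s. g (w s))) has_vector_derivative g (w t)) (at t within {0..h})"
      using has_vector_derivative_add[OF has_vector_derivative_const
          integral_has_vector_derivative[OF gw_cont that]] by simp
    then have "(w has_vector_derivative g (w t)) (at t within {0..h})"
      using has_vector_derivative_transform[where g=w and f="\<lambda>t. p + integral {0..t} (\<lambda>s. g (w s))",
          OF that w] by blast
    then show ?thesis
      using g w_ball[OF that] by simp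
  qed
  moreover have "w 0 = p" using w[of 0] h by simp
  ultimately show thesis using that h(1) by blast
qed

section \<open>Synchrony subspaces\<close>

lemma Diag_iff: "x \<in> Diag \<longleftrightarrow> (\<forall>a b. x $ a = x $ b)"
  unfolding Diag_def mem_Collect_eq forall_3 by auto

lemma SsubD: "p \<in> Ssub c \<Longrightarrow> a \<noteq> c \<Longrightarrow> b \<noteq> c \<Longrightarrow> p $ a = p $ b"
  unfolding Ssub_def by blast

lemma Diag_subset_Ssub: "Diag \<subseteq> Ssub c"
  unfolding Ssub_def subset_iff Diag_iff mem_Collect_eq by blast

lemma Ssub_Diag_iff:
  assumes "p \<in> Ssub a" "a \<noteq> b"
  shows "p \<in> Diag \<longleftrightarrow> p $ a = p $ b"
proof
  assume "p $ a = p $ b"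
  then have "p $ m = p $ b" for m
    using SsubD[OF assms(1), of m b] assms(2) by (cases "m = a") auto
  then show "p \<in> Diag"
    unfolding Diag_iff by metis
qed (unfold Diag_iff, blast)

lemma subspace_Diag: "subspace Diag"
  unfolding subspace_def Diag_def by (simp del: vec_eq_iff)

lemma subspace_Ssub: "subspace (Ssub c)"
proof (unfold subspace_def, intro conjI ballI allI)
  show "0 \<in> Ssub c"
    by (simp add: Ssub_def)
  show "x + y \<in> Ssub c" if "x \<in> Ssub c" "y \<in> Ssub c" for x y
    unfolding Ssub_def mem_Collect_eq vector_add_component by (metis SsubD that)
  show "r *\<^sub>R x \<in> Ssub c" if "x \<in> Ssub c" for r x
    unfolding Ssub_def mem_Collect_eq vector_scaleR_component by (metis SsubD that)
qed

lemma axis_mem_Ssub: "axis c r \<in> Ssub c"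
  unfolding Ssub_def by (simp add: axis_def)

section \<open>Dynamically invariant subspaces\<close>

lemma vector_derivative_mem_subspace:
  fixes u :: "real \<Rightarrow> 'a::euclidean_space"
  assumes M: "subspace M" and u: "(u has_vector_derivative v) (at 0 within {0..h})"
    and h: "0 < h" and uM: "\<And>t. t \<in> {0..h} \<Longrightarrow> u t \<in> M"
  shows "v \<in> M"
proof -
  have "((\<lambda>t. (u t - u 0 - t *\<^sub>R v) /\<^sub>R \<bar>t\<bar>) \<longlongrightarrow> 0) (at_right 0)"
    using u at_within_Icc_at_right[OF h]
    by (simp add: has_vector_derivative_def has_derivative_at_within)
  then have "((\<lambda>t. (u t - u 0 - t *\<^sub>R v) /\<^sub>R \<bar>t\<bar> + v) \<longlongrightarrow> 0 + v) (at_right 0)"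
    by (intro tendsto_add tendsto_const)
  moreover have "\<forall>\<^sub>F t in at_right 0. (u t - u 0 - t *\<^sub>R v) /\<^sub>R \<bar>t\<bar> + v = (u t - u 0) /\<^sub>R t"
    using eventually_at_right_less[of 0] by eventually_elim (simp add: scaleR_diff_right)
  ultimately have lim: "((\<lambda>t. (u t - u 0) /\<^sub>R t) \<longlongrightarrow> v) (at_right 0)"
    using tendsto_cong by fastforce
  have "\<forall>\<^sub>F t in at_right 0. (u t - u 0) /\<^sub>R t \<in> M"
    using eventually_at_right_real[OF h]
  proof eventually_elim
    case (elim t)
    then have "u t - u 0 \<in> M"
      using uM h by (intro subspace_diff[OF M]) auto
    then show ?case
      by (rule subspace_scale[OF M])
  qed
  then show ?thesis
    by (rule Lim_in_closed_set[OF closed_subspace[OF M] _ trivial_limit_at_right_real lim])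
qed

lemma dyn_invariant_subspace_tangent:
  assumes lip: "L-lipschitz_on (cball p r) f" "0 < r"
    and inv: "dyn_invariant f M" and M: "subspace M" "p \<in> M"
  shows "f p \<in> M"
proof -
  obtain h u where h: "0 < h" and u0: "u 0 = p"
    and u: "\<And>t. t \<in> {0..h} \<Longrightarrow> (u has_vector_derivative f (u t)) (at t within {0..h})"
    using lipschitz_on_cball_local_solution[OF lip] by blast
  have "u t \<in> M" if "t \<in> {0..h}" for t
    using inv M(2) h u0 u that
    unfolding dyn_invariant_def is_solution_def
    by (metis atLeastAtMost_iff is_interval_cc order_refl less_imp_le)
  then show ?thesis
    using vector_derivative_mem_subspace[OF M(1) u[of 0] h] h u0 by auto
qed

lemma has_derivative_mem_subspace:
  fixes f :: "'a::euclidean_space \<Rightarrow> 'a"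
  assumes f': "(f has_derivative f') (at \<xi>)" and M: "subspace M" "\<xi> \<in> M"
    and tangent: "\<And>q. q \<in> M \<Longrightarrow> f q \<in> M" and v: "v \<in> M"
  shows "f' v \<in> M"
proof (rule vector_derivative_mem_subspace[OF M(1) _ zero_less_one])
  have "((\<lambda>s. \<xi> + s *\<^sub>R v) has_derivative (\<lambda>s. s *\<^sub>R v)) (at 0)"
    by (auto intro!: derivative_eq_intros)
  from has_derivative_compose[OF this] f'
  have "((\<lambda>s. f (\<xi> + s *\<^sub>R v)) has_derivative (\<lambda>s. f' (s *\<^sub>R v))) (at 0)"
    by simp
  then show "((\<lambda>s. f (\<xi> + s *\<^sub>R v)) has_vector_derivative f' v) (at 0 within {0..1})"
    using has_derivative_linear[OF f']
    by (auto simp: has_vector_derivative_def linear_scale intro: has_derivative_at_withinI)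
  show "f (\<xi> + s *\<^sub>R v) \<in> M" for s
    using M v by (intro tangent subspace_add subspace_scale)
qed

section \<open>Network vector fields on undirected hypergraphs\<close>

lemma network_vf_nth:
  "network_vf F G E x $ k = F (x $ k) + (\<Sum>e\<in>{e\<in>E. k \<in> snd e}. G e (x $ k) x)"
  by (simp add: network_vf_def)

lemma Ck1_network_vf_nth:
  assumes "smooth F" "\<forall>e\<in>E. admissible_coupling (fst e) (G e)"
  shows "Ck 1 (\<lambda>x. network_vf F G E x $ k)"
proof -
  have nth: "linear (\<lambda>x::real^3. x $ k)"
    using bounded_linear_vec_nth bounded_linear.linear by blast
  have coupling: "Ck 1 (\<lambda>x. G e (x $ k) x)" if "e \<in> E" for e
  proof -
    have "Ck 1 (\<lambda>p::real \<times> (real^3). G e (fst p) (snd p))"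
      using assms(2) that unfolding admissible_coupling_def by (blast intro: smooth_imp_Ck1)
    moreover have "linear (\<lambda>x::real^3. (x $ k, x))"
      using nth by (auto simp: linear_iff)
    ultimately show ?thesis
      using Ck1_compose_linear[of "\<lambda>p. G e (fst p) (snd p)" "\<lambda>x. (x $ k, x)"] by simp
  qed
  have "Ck 1 (\<lambda>x. \<Sum>e\<in>{e\<in>E. k \<in> snd e}. G e (x $ k) x)"
    by (rule Ck1_sum) (simp, blast intro: coupling)
  then show ?thesis
    unfolding network_vf_nth by (rule Ck1_add[OF Ck1_compose_linear[OF smooth_imp_Ck1[OF assms(1)] nth]])
qed

lemma network_vf_dyn_invariant_subspace_tangent:
  assumes "smooth F" "\<forall>e\<in>E. admissible_coupling (fst e) (G e)"
    and "dyn_invariant (network_vf F G E) M" "subspace M" "q \<in> M"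
  shows "network_vf F G E q \<in> M"
proof -
  obtain L where "L-lipschitz_on (cball q 1) (network_vf F G E)"
    using Ck1_components_lipschitz_on_cball[OF Ck1_network_vf_nth[OF assms(1,2)]] by blast
  then show ?thesis
    using dyn_invariant_subspace_tangent assms(3-5) by fastforce
qed

lemma admissible_coupling_perturb_outside:
  assumes "admissible_coupling T g" "l \<notin> T"
  shows "g y (\<xi> + t *\<^sub>R axis l 1) = g y \<xi>"
proof -
  have "\<forall>m\<in>T. (\<xi> + t *\<^sub>R axis l 1) $ m = \<xi> $ m"
    using assms(2) by (auto simp: axis_def)
  then show ?thesis
    using assms(1) unfolding admissible_coupling_def by blast
qed

lemma admissible_coupling_perturb_swap:
  assumes g: "admissible_coupling T g" and T: "k \<in> T" "l \<in> T" and \<xi>: "\<xi> \<in> Diag"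
  shows "g y (\<xi> + t *\<^sub>R axis l 1) = g y (\<xi> + t *\<^sub>R axis k 1)"
proof -
  have "Transposition.transpose k l permutes T"
    using T by (rule permutes_swap_id)
  then have "g y (\<chi> m. (\<xi> + t *\<^sub>R axis l 1) $ Transposition.transpose k l m) = g y (\<xi> + t *\<^sub>R axis l 1)"
    using g unfolding admissible_coupling_def by blast
  moreover have "(\<chi> m. (\<xi> + t *\<^sub>R axis l 1) $ Transposition.transpose k l m) = \<xi> + t *\<^sub>R axis k 1"
  proof -
    have "\<xi> $ m = \<xi> $ n" for m n
      using \<xi> unfolding Diag_iff by blast
    then show ?thesis
      unfolding vec_eq_iff by (auto simp: axis_def transpose_eq_iff simp del: vec_eq_iff)
  qed
  ultimately show ?thesis
    by simp
qed

lemma undirected_network_vf_perturb_swap: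
  assumes und: "undirected_hypergraph E" and adm: "\<forall>e\<in>E. admissible_coupling (fst e) (G e)"
    and \<xi>: "\<xi> \<in> Diag" and kl: "k \<noteq> l"
  shows "network_vf F G E (\<xi> + t *\<^sub>R axis l 1) $ k - network_vf F G E (\<xi> + t *\<^sub>R axis k 1) $ l
       = network_vf F G E \<xi> $ k - network_vf F G E \<xi> $ l"
proof -
  define c where "c = \<xi> $ k"
  define z where "z m t = \<xi> + t *\<^sub>R axis m 1" for m t
  have c: "\<xi> $ m = c" for m
    using \<xi> unfolding Diag_iff c_def by blast
  have zc: "z l t $ k = c" "z k t $ l = c" for t
    using kl c by (auto simp: z_def axis_def)
  define D where "D e t = (if k \<in> snd e then G e c (z l t) else 0) - (if l \<in> snd e then G e c (z k t) else 0)"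
    for e t
  \<comment> \<open>Per hyperedge, the swap symmetry of the coupling cancels the perturbation.\<close>
  have D: "D e t = D e 0" if "e \<in> E" for e t
  proof -
    have "snd e = fst e"
      using und that unfolding undirected_hypergraph_def by blast
    moreover have "admissible_coupling (fst e) (G e)"
      using adm that by blast
    ultimately show ?thesis
      unfolding D_def z_def
      using admissible_coupling_perturb_swap[of "fst e" "G e" k l \<xi>]
        admissible_coupling_perturb_outside[of "fst e" "G e"] \<xi>
      by auto
  qed
  have "network_vf F G E (z l t) $ k - network_vf F G E (z k t) $ l = (\<Sum>e\<in>E. D e t)" for t
    unfolding network_vf_nth zc D_def by (simp add: sum.inter_filter sum_subtractf)
  moreover have "(\<Sum>e\<in>E. D e t) = (\<Sum>e\<in>E. D e 0)"
    using D by (rule sum.cong[OF refl])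
  ultimately show ?thesis
    by (metis z_def add.right_neutral scale_zero_left)
qed

lemma has_real_derivative_line_nth:
  fixes f :: "'a::real_normed_vector \<Rightarrow> real^'n"
  assumes "(f has_derivative f') (at \<xi>)"
  shows "((\<lambda>s. f (\<xi> + s *\<^sub>R v) $ a) has_real_derivative f' v $ a) (at 0)"
proof -
  have "((\<lambda>s. \<xi> + s *\<^sub>R v) has_derivative (\<lambda>s. s *\<^sub>R v)) (at 0)"
    by (auto intro!: derivative_eq_intros)
  from has_derivative_compose[OF this] assms
  have "((\<lambda>s. f (\<xi> + s *\<^sub>R v)) has_derivative (\<lambda>s. f' (s *\<^sub>R v))) (at 0)"
    by simp
  from bounded_linear.has_derivative[OF bounded_linear_vec_nth[of a] this]
  show ?thesis
    using has_derivative_linear[OF assms]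
    by (simp add: has_field_derivative_def linear_scale mult.commute[of _ "f' v $ a"])
qed

lemma undirected_network_jacobian_symmetric:
  assumes "undirected_hypergraph E" "\<forall>e\<in>E. admissible_coupling (fst e) (G e)"
    and "\<xi> \<in> Diag" and f': "(network_vf F G E has_derivative f') (at \<xi>)"
  shows "f' (axis l 1) $ k = f' (axis k 1) $ l"
proof (cases "k = l")
  case False
  have "((\<lambda>s. network_vf F G E (\<xi> + s *\<^sub>R axis l 1) $ k - network_vf F G E (\<xi> + s *\<^sub>R axis k 1) $ l)
      has_real_derivative f' (axis l 1) $ k - f' (axis k 1) $ l) (at 0)"
    by (intro DERIV_diff has_real_derivative_line_nth f')
  then have "((\<lambda>s. network_vf F G E \<xi> $ k - network_vf F G E \<xi> $ l)
      has_real_derivative f' (axis l 1) $ k - f' (axis k 1) $ l) (at 0)"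
    by (simp add: undirected_network_vf_perturb_swap[OF assms(1-3) False])
  then show ?thesis
    using DERIV_unique[OF _ DERIV_const] by fastforce
qed simp

section \<open>Transverse rates along a connection\<close>

lemma Ck1_sign_along_line:
  fixes \<psi> :: "'a::euclidean_space \<Rightarrow> real"
  assumes \<psi>: "Ck 1 \<psi>" and zero: "\<psi> q = 0" and d: "d \<noteq> 0"
    and neg: "\<And>s. \<bar>s\<bar> \<le> \<bar>d\<bar> \<Longrightarrow> frechet_derivative \<psi> (at (q + s *\<^sub>R v)) v < 0"
  shows "\<psi> (q + d *\<^sub>R v) * d < 0"
proof -
  define g where "g s = \<psi> (q + s *\<^sub>R v)" for s
  have g': "\<exists>y. (g has_real_derivative y) (at s) \<and> y < 0" if "\<bar>s\<bar> \<le> \<bar>d\<bar>" for s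
    using Ck1_has_real_derivative_line[OF \<psi>, of q v s] neg[OF that] unfolding g_def by blast
  show ?thesis
  proof (cases "0 < d")
    case True
    have "g d < g 0"
    proof (rule DERIV_neg_imp_decreasing[OF True])
      fix s assume "0 \<le> s" "s \<le> d"
      then show "\<exists>y. (g has_real_derivative y) (at s) \<and> y < 0"
        by (intro g') linarith
    qed
    with True zero show ?thesis
      by (simp add: g_def mult_neg_pos)
  next
    case False
    with d have "d < 0"
      by simp
    have "g 0 < g d"
    proof (rule DERIV_neg_imp_decreasing[OF \<open>d < 0\<close>])
      fix s assume "d \<le> s" "s \<le> 0"
      then show "\<exists>y. (g has_real_derivative y) (at s) \<and> y < 0"
        by (intro g') linarith
    qed
    with \<open>d < 0\<close> zero show ?thesis
      by (simp add: g_def mult_pos_neg)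
  qed
qed

lemma transverse_sign_near_diagonal:
  fixes \<psi> :: "real^3 \<Rightarrow> real"
  assumes \<psi>: "Ck 1 \<psi>" and vanish: "\<And>q. q \<in> Diag \<Longrightarrow> \<psi> q = 0"
    and \<xi>: "\<xi> \<in> Diag" and ab: "a \<noteq> b"
    and neg: "frechet_derivative \<psi> (at \<xi>) (axis a 1) < 0"
  obtains r where "0 < r"
    and "\<And>p. p \<in> Ssub a \<Longrightarrow> dist p \<xi> < r \<Longrightarrow> p $ a \<noteq> p $ b \<Longrightarrow> \<psi> p * (p $ a - p $ b) < 0"
proof -
  define D where "D q = frechet_derivative \<psi> (at q) (axis a 1)" for q
  obtain \<rho> where \<rho>: "0 < \<rho>" and close: "\<And>q. dist q \<xi> < \<rho> \<Longrightarrow> dist (D q) (D \<xi>) < - D \<xi>"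
    using continuous_on_iff[THEN iffD1, OF Ck1_continuous_derivative[OF \<psi>], rule_format, of \<xi> "- D \<xi>"] neg
    unfolding D_def by auto
  have D_neg: "D q < 0" if "dist q \<xi> < \<rho>" for q
    using close[OF that] unfolding dist_real_def by linarith
  have "\<psi> p * (p $ a - p $ b) < 0"
    if p: "p \<in> Ssub a" "dist p \<xi> < \<rho> / 5" "p $ a \<noteq> p $ b" for p
  proof -
    define d where "d = p $ a - p $ b"
    define \<pi> where "\<pi> = p - d *\<^sub>R axis a 1"
    have "\<pi> $ m = p $ b" for m
      using SsubD[OF p(1), of m b] ab by (cases "m = a") (auto simp: \<pi>_def d_def axis_def)
    then have "\<pi> \<in> Diag"
      unfolding Diag_iff by simp
    have "\<xi> $ a = \<xi> $ b"
      using \<xi> unfolding Diag_iff by blast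
    then have "\<bar>d\<bar> \<le> \<bar>(p - \<xi>) $ a\<bar> + \<bar>(p - \<xi>) $ b\<bar>"
      unfolding d_def by (simp add: abs_triangle_ineq4)
    then have d_small: "\<bar>d\<bar> \<le> 2 * norm (p - \<xi>)"
      using component_le_norm_cart[of "p - \<xi>" a] component_le_norm_cart[of "p - \<xi>" b] by linarith
    have "dist (\<pi> + s *\<^sub>R axis a 1) \<xi> < \<rho>" if "\<bar>s\<bar> \<le> \<bar>d\<bar>" for s
    proof -
      have "dist (\<pi> + s *\<^sub>R axis a 1) \<xi> = norm ((p - \<xi>) + (s - d) *\<^sub>R axis a 1)"
        by (simp add: \<pi>_def dist_norm algebra_simps)
      also have "\<dots> \<le> norm (p - \<xi>) + \<bar>s - d\<bar>"
        using norm_triangle_ineq[of "p - \<xi>" "(s - d) *\<^sub>R axis a (1::real)"] by simp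
      also have "\<dots> < \<rho>"
        using that p(2) d_small by (simp add: dist_norm)
      finally show ?thesis .
    qed
    then have "\<psi> (\<pi> + d *\<^sub>R axis a 1) * d < 0"
      using Ck1_sign_along_line[OF \<psi> vanish[OF \<open>\<pi> \<in> Diag\<close>]] D_neg p(3)
      unfolding D_def d_def by simp
    then show ?thesis
      by (simp add: \<pi>_def d_def)
  qed
  then show thesis
    using that[of "\<rho> / 5"] \<rho> by simp
qed

lemma has_real_derivative_vec_nth:
  fixes z :: "real \<Rightarrow> real^'n"
  assumes "(z has_vector_derivative v) F"
  shows "((\<lambda>t. z t $ a) has_real_derivative v $ a) F"
proof -
  have "(z has_derivative (\<lambda>s. s *\<^sub>R v)) F"
    using assms by (simp add: has_vector_derivative_def)
  from bounded_linear.has_derivative[OF bounded_linear_vec_nth[of a] this]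
  show ?thesis
    by (simp add: has_field_derivative_def mult.commute[of _ "v $ a"])
qed

lemma is_solution_reverse:
  assumes "is_solution f UNIV z"
  shows "is_solution (\<lambda>q. - f q) UNIV (\<lambda>t. z (- t))"
  unfolding is_solution_def
proof
  fix t :: real
  have "(uminus has_vector_derivative -1) (at t)"
    by (auto intro!: derivative_eq_intros)
  moreover have "(z has_vector_derivative f (z (- t))) (at (- t))"
    using assms by (simp add: is_solution_def)
  ultimately show "((\<lambda>t. z (- t)) has_vector_derivative - f (z (- t))) (at t within UNIV)"
    using vector_diff_chain_at[of uminus "-1" t z] by (simp add: o_def)
qed

lemma decreasing_not_tendsto_zero_at_bot:
  fixes V :: "real \<Rightarrow> real"
  assumes V': "\<And>t. t \<le> T \<Longrightarrow> \<exists>y. (V has_real_derivative y) (at t) \<and> y < 0" and pos: "0 < V T"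
  shows "\<not> (V \<longlongrightarrow> 0) at_bot"
proof
  assume "(V \<longlongrightarrow> 0) at_bot"
  from order_tendstoD(2)[OF this pos] obtain T' where "\<And>t. t \<le> T' \<Longrightarrow> V t < V T"
    by (auto simp: eventually_at_bot_linorder)
  moreover have "V T < V (min T' (T - 1))"
    by (rule DERIV_neg_imp_decreasing) (auto intro: V')
  ultimately show False
    by (metis min.cobounded1 order.asym)
qed

lemma alpha_limit_transverse_rate_nonneg:
  fixes f :: "real^3 \<Rightarrow> real^3"
  assumes C1: "\<And>c. Ck 1 (\<lambda>q. f q $ c)" and tangent: "\<And>q. q \<in> Diag \<Longrightarrow> f q \<in> Diag"
    and f': "(f has_derivative f') (at \<xi>)" and \<xi>: "\<xi> \<in> Diag" and ab: "a \<noteq> b"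
    and z: "is_solution f UNIV z" and zS: "\<And>t. z t \<in> Ssub a - Diag" and lim: "(z \<longlongrightarrow> \<xi>) at_bot"
  shows "f' (axis a 1) $ b \<le> f' (axis a 1) $ a"
proof (rule ccontr)
  define \<psi> where "\<psi> q = f q $ a - f q $ b" for q
  have "(\<psi> has_derivative (\<lambda>v. f' v $ a - f' v $ b)) (at \<xi>)"
    unfolding \<psi>_def by (intro has_derivative_diff bounded_linear.has_derivative[OF bounded_linear_vec_nth f'])
  moreover assume "\<not> f' (axis a 1) $ b \<le> f' (axis a 1) $ a"
  ultimately have "frechet_derivative \<psi> (at \<xi>) (axis a 1) < 0"
    by (simp add: frechet_derivative_at[symmetric])
  moreover have "\<psi> q = 0" if "q \<in> Diag" for q
    using tangent[OF that] unfolding \<psi>_def Diag_iff by simp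
  ultimately obtain r where "0 < r"
    and sign: "\<And>p. p \<in> Ssub a \<Longrightarrow> dist p \<xi> < r \<Longrightarrow> p $ a \<noteq> p $ b \<Longrightarrow> \<psi> p * (p $ a - p $ b) < 0"
    using transverse_sign_near_diagonal[of \<psi>] Ck1_diff[OF C1 C1] \<xi> ab unfolding \<psi>_def by blast
  obtain T where T: "\<And>t. t \<le> T \<Longrightarrow> dist (z t) \<xi> < r"
    using tendstoD[OF lim \<open>0 < r\<close>] by (auto simp: eventually_at_bot_linorder)
  have off_diag: "z t $ a \<noteq> z t $ b" for t
    using zS[of t] Ssub_Diag_iff[of "z t" a b] ab by blast
  define V where "V t = (z t $ a - z t $ b)\<^sup>2" for t
  have "(V has_real_derivative 2 * (\<psi> (z t) * (z t $ a - z t $ b))) (at t)" for t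
  proof -
    have "((\<lambda>t. z t $ a - z t $ b) has_real_derivative \<psi> (z t)) (at t)"
      using z unfolding is_solution_def \<psi>_def
      by (intro DERIV_diff has_real_derivative_vec_nth) simp_all
    from DERIV_mult[OF this this] show ?thesis
      by (simp add: V_def[abs_def] power2_eq_square algebra_simps)
  qed
  moreover have "\<psi> (z t) * (z t $ a - z t $ b) < 0" if "t \<le> T" for t
    using sign[OF _ T[OF that] off_diag] zS by blast
  ultimately have "\<exists>y. (V has_real_derivative y) (at t) \<and> y < 0" if "t \<le> T" for t
    using that by (auto intro!: exI)
  moreover have "0 < V T"
    using off_diag[of T] by (simp add: V_def)
  ultimately have "\<not> (V \<longlongrightarrow> 0) at_bot"
    by (rule decreasing_not_tendsto_zero_at_bot)
  moreover have "(V \<longlongrightarrow> (\<xi> $ a - \<xi> $ b)\<^sup>2) at_bot"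
    unfolding V_def[abs_def] by (intro tendsto_intros lim)
  moreover have "\<xi> $ a - \<xi> $ b = 0"
    using \<xi> unfolding Diag_iff by simp
  ultimately show False
    by simp
qed

lemma omega_limit_transverse_rate_nonpos:
  fixes f :: "real^3 \<Rightarrow> real^3"
  assumes C1: "\<And>c. Ck 1 (\<lambda>q. f q $ c)" and tangent: "\<And>q. q \<in> Diag \<Longrightarrow> f q \<in> Diag"
    and f': "(f has_derivative f') (at \<xi>)" and \<xi>: "\<xi> \<in> Diag" and ab: "a \<noteq> b"
    and z: "is_solution f UNIV z" and zS: "\<And>t. z t \<in> Ssub a - Diag" and lim: "(z \<longlongrightarrow> \<xi>) at_top"
  shows "f' (axis a 1) $ a \<le> f' (axis a 1) $ b"
proof -
  have "(- f' (axis a 1)) $ b \<le> (- f' (axis a 1)) $ a"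
  proof (rule alpha_limit_transverse_rate_nonneg[of "\<lambda>q. - f q"])
    show "Ck 1 (\<lambda>q. (- f q) $ c)" for c
      using Ck1_minus[OF C1] by simp
    show "- f q \<in> Diag" if "q \<in> Diag" for q
      using subspace_neg[OF subspace_Diag tangent[OF that]] .
    show "((\<lambda>q. - f q) has_derivative (\<lambda>v. - f' v)) (at \<xi>)"
      using has_derivative_minus[OF f'] .
    show "is_solution (\<lambda>q. - f q) UNIV (\<lambda>t. z (- t))"
      using is_solution_reverse[OF z] .
    show "((\<lambda>t. z (- t)) \<longlongrightarrow> \<xi>) at_bot"
      using lim by (simp add: filterlim_at_bot_mirror)
  qed (use \<xi> ab zS in auto)
  then show ?thesis
    by simp
qed

section \<open>The Jacobian at the equilibrium\<close>

lemma third_of_three: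
  fixes i j :: 3
  assumes "i \<noteq> j"
  obtains k where "k \<noteq> i" "k \<noteq> j" "UNIV = {i, j, k}"
proof -
  have "card (UNIV - {i, j}) = 1"
    using assms by (simp add: card_Diff_subset)
  then obtain k where k: "UNIV - {i, j} = {k}"
    by (rule card_1_singletonE)
  then show thesis
    by (intro that[of k]) auto
qed

text \<open>\<open>L (axis i 1) $ i - L (axis i 1) $ j\<close> is the eigenvalue of \<open>L\<close> transverse to \<open>\<Delta>\<close> inside
  \<open>S_i\<close>. Invariance and symmetry make it equal to the one inside \<open>S_j\<close>, so the two sign
  conditions force both to vanish.\<close>
lemma jacobian_field_cycle_columns_eq:
  fixes L :: "real^3 \<Rightarrow> real^3"
  assumes L: "linear L" and ij: "i \<noteq> j"
    and diag: "\<And>v. v \<in> Diag \<Longrightarrow> L v \<in> Diag"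
    and Si: "\<And>v. v \<in> Ssub i \<Longrightarrow> L v \<in> Ssub i" and Sj: "\<And>v. v \<in> Ssub j \<Longrightarrow> L v \<in> Ssub j"
    and symmetric: "\<And>k l. L (axis l 1) $ k = L (axis k 1) $ l"
    and rate_i: "L (axis i 1) $ j \<le> L (axis i 1) $ i" and rate_j: "L (axis j 1) $ j \<le> L (axis j 1) $ i"
  shows "L (axis i 1) = L (axis j 1)"
proof -
  obtain k where ki: "k \<noteq> i" and kj: "k \<noteq> j" and univ: "UNIV = {i, j, k}"
    using third_of_three[OF ij] .
  have all3: "a = i \<or> a = j \<or> a = k" for a
    using UNIV_I[of a] unfolding univ by simp
  define A B C where "A = L (axis i 1)" and "B = L (axis j 1)" and "C = L (axis k 1)"
  have "A \<in> Ssub i" "B \<in> Ssub j"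
    unfolding A_def B_def by (intro Si Sj axis_mem_Ssub)+
  then have "A $ j = A $ k" "B $ i = B $ k"
    using ij ki kj by (auto intro: SsubD)
  moreover have "A $ j = B $ i" "C $ i = A $ k" "C $ j = B $ k"
    unfolding A_def B_def C_def by (rule symmetric)+
  moreover have "(A + B + C) $ i = (A + B + C) $ j"
  proof -
    have "(axis i 1 + axis j 1 + axis k 1) $ a = (1::real)" for a
      using all3[of a] ij ki kj by (auto simp: axis_def)
    then have "axis i 1 + axis j 1 + axis k 1 \<in> Diag"
      unfolding Diag_iff by simp
    then have "A + B + C \<in> Diag"
      unfolding A_def B_def C_def linear_add[OF L, symmetric] by (rule diag)
    then show ?thesis
      unfolding Diag_iff by blast
  qed
  ultimately have "A $ i = B $ i" "A $ j = B $ j" "A $ k = B $ k"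
    using rate_i rate_j unfolding A_def[symmetric] B_def[symmetric] by simp_all
  then have "A $ m = B $ m" for m
    using all3[of m] by (elim disjE) simp_all
  then show ?thesis
    unfolding A_def B_def vec_eq_iff by blast
qed

lemma hyperbolic_equilibrium_jacobian_columns_distinct:
  assumes hyp: "hyperbolic_equilibrium f \<xi>" and f': "(f has_derivative f') (at \<xi>)" and ij: "i \<noteq> j"
  shows "f' (axis i 1) \<noteq> f' (axis j 1)"
proof
  assume eq: "f' (axis i 1) = f' (axis j 1)"
  obtain f'' where f'': "(f has_derivative f'') (at \<xi>)"
    and det: "\<And>\<mu>. Re \<mu> = 0 \<Longrightarrow>
      det (\<chi> a b. complex_of_real (matrix f'' $ a $ b) - (if a = b then \<mu> else 0)) \<noteq> 0"
    using hyp unfolding hyperbolic_equilibrium_def by blast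
  have "f'' = f'"
    using has_derivative_unique[OF f'' f'] .
  \<comment> \<open>This is the case \<open>\<mu> = 0\<close> of hyperbolicity: the matrix would have two equal columns.\<close>
  then have "column i (\<chi> a b. complex_of_real (matrix f'' $ a $ b))
      = column j (\<chi> a b. complex_of_real (matrix f'' $ a $ b))"
    using eq by (simp add: column_def matrix_def vec_eq_iff)
  then have "det (\<chi> a b. complex_of_real (matrix f'' $ a $ b)) = 0"
    by (rule det_identical_columns[OF ij])
  then show False
    using det[of 0] by simp
qed

lemma no_field_cycle_connections:
  fixes E :: "hedge set" and F :: "real \<Rightarrow> real" and G :: "hedge \<Rightarrow> real \<Rightarrow> real^3 \<Rightarrow> real"
  defines "f \<equiv> network_vf F G E"
  assumes und: "undirected_hypergraph E" and smooth: "smooth F"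
    and adm: "\<forall>e\<in>E. admissible_coupling (fst e) (G e)"
    and ij: "i \<noteq> j" and inv: "dyn_invariant f Diag" "dyn_invariant f (Ssub i)" "dyn_invariant f (Ssub j)"
    and \<xi>: "\<xi> \<in> Diag" "hyperbolic_equilibrium f \<xi>"
    and x: "is_solution f UNIV x" "\<And>t. x t \<in> Ssub i - Diag" "(x \<longlongrightarrow> \<xi>) at_bot"
    and y: "is_solution f UNIV y" "\<And>t. y t \<in> Ssub j - Diag" "(y \<longlongrightarrow> \<xi>) at_top"
  shows False
proof -
  have C1: "Ck 1 (\<lambda>q. f q $ c)" for c
    unfolding f_def by (rule Ck1_network_vf_nth[OF smooth adm])
  have tangent: "f q \<in> M" if "dyn_invariant f M" "subspace M" "q \<in> M" for M q
    using network_vf_dyn_invariant_subspace_tangent[OF smooth adm] that unfolding f_def .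
  obtain f' where f': "(f has_derivative f') (at \<xi>)"
    using \<xi>(2) unfolding hyperbolic_equilibrium_def by blast
  have jacobian_tangent: "f' v \<in> M" if "dyn_invariant f M" "subspace M" "\<xi> \<in> M" "v \<in> M" for M v
    using has_derivative_mem_subspace[OF f' that(2,3) tangent[OF that(1,2)] that(4)] .
  have "f' (axis i 1) = f' (axis j 1)"
  proof (rule jacobian_field_cycle_columns_eq[OF has_derivative_linear[OF f'] ij])
    show "f' v \<in> Diag" if "v \<in> Diag" for v
      using jacobian_tangent[OF inv(1) subspace_Diag \<xi>(1) that] .
    show "f' v \<in> Ssub i" if "v \<in> Ssub i" for v
      using jacobian_tangent[OF inv(2) subspace_Ssub _ that] \<xi>(1) Diag_subset_Ssub by blast
    show "f' v \<in> Ssub j" if "v \<in> Ssub j" for v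
      using jacobian_tangent[OF inv(3) subspace_Ssub _ that] \<xi>(1) Diag_subset_Ssub by blast
    show "f' (axis l 1) $ k = f' (axis k 1) $ l" for k l
      using undirected_network_jacobian_symmetric[OF und adm \<xi>(1)] f' unfolding f_def by blast
    show "f' (axis i 1) $ j \<le> f' (axis i 1) $ i"
      using alpha_limit_transverse_rate_nonneg[OF C1 tangent[OF inv(1) subspace_Diag] f' \<xi>(1) ij x] .
    show "f' (axis j 1) $ j \<le> f' (axis j 1) $ i"
      using omega_limit_transverse_rate_nonpos[OF C1 tangent[OF inv(1) subspace_Diag] f' \<xi>(1) ij[symmetric] y] .
  qed
  then show False
    using hyperbolic_equilibrium_jacobian_columns_distinct[OF \<xi>(2) f' ij] by blast
qed

theorem mainTheorem2:
  fixes E :: "hedge set"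
    and F :: "real \<Rightarrow> real"
    and G :: "hedge \<Rightarrow> real \<Rightarrow> real^3 \<Rightarrow> real"
  assumes "undirected_hypergraph E"
    and "smooth F"
    and "\<forall>e\<in>E. admissible_coupling (fst e) (G e)"
  shows "\<not> (\<exists>i j \<xi>1 \<xi>2 x y. i \<noteq> j \<and>
            dyn_invariant (network_vf F G E) Diag \<and>
            dyn_invariant (network_vf F G E) (Ssub i) \<and>
            dyn_invariant (network_vf F G E) (Ssub j) \<and>
            \<xi>1 \<in> Diag \<and> \<xi>2 \<in> Diag \<and> \<xi>1 \<noteq> \<xi>2 \<and>
            hyperbolic_equilibrium (network_vf F G E) \<xi>1 \<and>
            hyperbolic_equilibrium (network_vf F G E) \<xi>2 \<and>
            heteroclinic (network_vf F G E) \<xi>1 \<xi>2 x \<and> (\<forall>t. x t \<in> Ssub i - Diag) \<and>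
            heteroclinic (network_vf F G E) \<xi>2 \<xi>1 y \<and> (\<forall>t. y t \<in> Ssub j - Diag))"
  unfolding heteroclinic_def using no_field_cycle_connections[OF assms] by blast

end
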